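(* Let $K\subset\mathbb{R}^n$ be a strongly convex body with parameter $k>0$ and diameter $d$. If $\sigma\asymp(k\sqrt n)^{-1}$, then $\varepsilon_K(\sigma)\gtrsim d$.
   Context: $K$ is strongly convex with parameter $k$ if for all $\mu,\nu\in K$ and $\lambda\in[0,1]$, the closed Euclidean ball $B(\lambda\mu+(1-\lambda)\nu,\,k\lambda(1-\lambda)\|\mu-\nu\|^2)$ is contained in $K$. Gaussian sequence model: $Y=\mu+\xi$, $\mu\in K$, $\xi\sim N(0,\sigma^2\mathbb{I}_n)$; LSE $\hat\mu=\operatorname{argmin}_{\nu\in K}\|Y-\nu\|_2^2$; $\varepsilon_K(\sigma)^2=\sup_{\mu\in K}\mathbb{E}_\mu\|\hat\mu-\mu\|_2^2$. $\asymp,\gtrsim$ hide absolute constants. *)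

theory Defs
  imports "HOL-Probability.Probability"
begin

text \<open>Vectors of R^n are represented as functions nat => real; only coordinates i < n matter.
  Points of R^n are the extensional functions in rvec n.\<close>

definition rvec :: "nat \<Rightarrow> (nat \<Rightarrow> real) set" where
  "rvec n = PiE {..<n} (\<lambda>_. UNIV)"

definition vnorm :: "nat \<Rightarrow> (nat \<Rightarrow> real) \<Rightarrow> real" where
  "vnorm n x = sqrt (\<Sum>i<n. (x i)^2)"

definition vdist :: "nat \<Rightarrow> (nat \<Rightarrow> real) \<Rightarrow> (nat \<Rightarrow> real) \<Rightarrow> real" where
  "vdist n x y = vnorm n (\<lambda>i. x i - y i)"

definition vcomb :: "nat \<Rightarrow> real \<Rightarrow> (nat \<Rightarrow> real) \<Rightarrow> (nat \<Rightarrow> real) \<Rightarrow> (nat \<Rightarrow> real)" where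
  "vcomb n l x y = (\<lambda>i\<in>{..<n}. l * x i + (1 - l) * y i)"

definition vadd :: "nat \<Rightarrow> (nat \<Rightarrow> real) \<Rightarrow> (nat \<Rightarrow> real) \<Rightarrow> (nat \<Rightarrow> real)" where
  "vadd n x y = (\<lambda>i\<in>{..<n}. x i + y i)"

definition ncball :: "nat \<Rightarrow> (nat \<Rightarrow> real) \<Rightarrow> real \<Rightarrow> (nat \<Rightarrow> real) set" where
  "ncball n c r = {x \<in> rvec n. vdist n x c \<le> r}"

definition convex_body :: "nat \<Rightarrow> (nat \<Rightarrow> real) set \<Rightarrow> bool" where
  "convex_body n K \<longleftrightarrow>
     K \<subseteq> rvec n
     \<and> (\<forall>x\<in>rvec n. (\<forall>e>0. \<exists>y\<in>K. vdist n x y < e) \<longrightarrow> x \<in> K)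
     \<and> (\<exists>R. \<forall>x\<in>K. vnorm n x \<le> R)
     \<and> (\<forall>x\<in>K. \<forall>y\<in>K. \<forall>l\<in>{0..1}. vcomb n l x y \<in> K)
     \<and> (\<exists>x\<in>K. \<exists>r>0. ncball n x r \<subseteq> K)"

definition strongly_convex :: "nat \<Rightarrow> real \<Rightarrow> (nat \<Rightarrow> real) set \<Rightarrow> bool" where
  "strongly_convex n k K \<longleftrightarrow>
     (\<forall>\<mu>\<in>K. \<forall>\<nu>\<in>K. \<forall>l\<in>{0..1}.
        ncball n (vcomb n l \<mu> \<nu>) (k * l * (1 - l) * (vdist n \<mu> \<nu>)^2) \<subseteq> K)"

definition diam :: "nat \<Rightarrow> (nat \<Rightarrow> real) set \<Rightarrow> real" where
  "diam n K = Sup {vdist n \<mu> \<nu> | \<mu> \<nu>. \<mu> \<in> K \<and> \<nu> \<in> K}"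

text \<open>Least squares estimator: a minimiser of |Y - nu|^2 over K (unique for closed convex K).\<close>
definition lse :: "nat \<Rightarrow> (nat \<Rightarrow> real) set \<Rightarrow> (nat \<Rightarrow> real) \<Rightarrow> (nat \<Rightarrow> real)" where
  "lse n K Y = (SOME \<nu>. \<nu> \<in> K \<and> (\<forall>\<nu>'\<in>K. (vdist n Y \<nu>)^2 \<le> (vdist n Y \<nu>')^2))"

definition gauss :: "nat \<Rightarrow> real \<Rightarrow> (nat \<Rightarrow> real) measure" where
  "gauss n \<sigma> = PiM {..<n} (\<lambda>_. density lborel (normal_density 0 \<sigma>))"

definition risk :: "nat \<Rightarrow> (nat \<Rightarrow> real) set \<Rightarrow> real \<Rightarrow> (nat \<Rightarrow> real) \<Rightarrow> real" where
  "risk n K \<sigma> \<mu> = (\<integral>\<xi>. (vdist n (lse n K (vadd n \<mu> \<xi>)) \<mu>)^2 \<partial>gauss n \<sigma>)"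

definition eps :: "nat \<Rightarrow> (nat \<Rightarrow> real) set \<Rightarrow> real \<Rightarrow> real" where
  "eps n K \<sigma> = sqrt (Sup (risk n K \<sigma> ` K))"

end

theory Submission
  imports Defs
begin

text \<open>Let \<open>D = \<sigma> * sqrt n\<close> be the typical length of the noise, so that \<open>k * D \<ge> c1\<close>, and pick
  \<open>a, b \<in> K\<close> with \<open>|a - b| > diam K / 2\<close>. By a second-moment (Paley-Zygmund) argument,
  using \<open>E |\<xi>|\<^sup>4 \<le> 3 (E |\<xi>|\<^sup>2)\<^sup>2\<close>, the event \<open>|\<xi>| \<ge> D / 2\<close> carries a fixed fraction of
  the mass, so it suffices to bound the estimation error on that event.
  If \<open>diam K \<le> D / 4\<close>, the points \<open>a + \<xi>\<close> and \<open>b + \<xi>\<close> are at distance at least \<open>D / 4\<close>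
  from \<open>K\<close>, and strong convexity makes the projection onto \<open>K\<close> contract their distance by a
  factor \<open>1 + k * D / 4 \<ge> 1 + c1 / 4\<close>; hence the two estimation errors add up to a fixed
  fraction of \<open>|a - b|\<close>. If \<open>diam K > D / 4\<close>, strong convexity puts a ball of radius
  \<open>r = k |a - b|\<^sup>2 / 4\<close>, which is of order \<open>c1 * diam K\<close>, around the midpoint \<open>m\<close> into \<open>K\<close>,
  and the projection of \<open>m + \<xi>\<close> stays at distance \<open>min |\<xi>| r\<close> from \<open>m\<close>.\<close>

section \<open>Euclidean geometry on coordinate vectors\<close>

definition vinner :: "nat \<Rightarrow> (nat \<Rightarrow> real) \<Rightarrow> (nat \<Rightarrow> real) \<Rightarrow> real" where
  "vinner n x y = (\<Sum>i<n. x i * y i)"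

lemma vnorm_nonneg [simp]: "0 \<le> vnorm n x"
  by (simp add: vnorm_def sum_nonneg)

lemma vdist_nonneg [simp]: "0 \<le> vdist n x y"
  by (simp add: vdist_def)

lemma vnorm_power2: "(vnorm n x)\<^sup>2 = (\<Sum>i<n. (x i)\<^sup>2)"
  by (simp add: vnorm_def sum_nonneg)

lemma vdist_power2: "(vdist n x y)\<^sup>2 = (\<Sum>i<n. (x i - y i)\<^sup>2)"
  by (simp add: vdist_def vnorm_power2)

lemma vnorm_cong: "(\<And>i. i < n \<Longrightarrow> x i = y i) \<Longrightarrow> vnorm n x = vnorm n y"
  by (simp add: vnorm_def)

lemma vinner_cong:
  "(\<And>i. i < n \<Longrightarrow> x i = x' i) \<Longrightarrow> (\<And>i. i < n \<Longrightarrow> y i = y' i) \<Longrightarrow> vinner n x y = vinner n x' y'"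
  unfolding vinner_def by (intro sum.cong) auto

lemma vdist_commute: "vdist n x y = vdist n y x"
  unfolding vdist_def vnorm_def by (simp add: power2_commute)

lemma vdist_self [simp]: "vdist n x x = 0"
  by (simp add: vdist_def vnorm_def)

lemma vnorm_eq_L2_set: "vnorm n x = L2_set x {..<n}"
  by (simp add: vnorm_def L2_set_def)

lemma vnorm_add_le: "vnorm n (\<lambda>i. x i + y i) \<le> vnorm n x + vnorm n y"
  unfolding vnorm_eq_L2_set by (rule L2_set_triangle_ineq)

lemma vdist_triangle: "vdist n x z \<le> vdist n x y + vdist n y z"
  using vnorm_add_le[of n "\<lambda>i. x i - y i" "\<lambda>i. y i - z i"] by (simp add: vdist_def)

lemma vnorm_scale: "vnorm n (\<lambda>i. c * x i) = \<bar>c\<bar> * vnorm n x"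
  unfolding vnorm_def by (simp add: power_mult_distrib sum_distrib_left[symmetric] real_sqrt_mult)

lemma vnorm_le_sum_abs: "vnorm n x \<le> (\<Sum>i<n. \<bar>x i\<bar>)"
  unfolding vnorm_eq_L2_set by (rule L2_set_le_sum_abs)

lemma abs_coord_le_vnorm: "i < n \<Longrightarrow> \<bar>x i\<bar> \<le> vnorm n x"
  using member_le_L2_set[of "{..<n}" i "\<lambda>i. \<bar>x i\<bar>"] by (simp add: vnorm_eq_L2_set L2_set_def)

lemma vnorm_eq_0_iff: "vnorm n x = 0 \<longleftrightarrow> (\<forall>i<n. x i = 0)"
  using abs_coord_le_vnorm[of _ n x] by (auto simp: vnorm_def)

lemma vinner_le_vnorm_mult: "vinner n x y \<le> vnorm n x * vnorm n y"
proof -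
  have "vinner n x y \<le> (\<Sum>i<n. \<bar>x i\<bar> * \<bar>y i\<bar>)"
    unfolding vinner_def by (rule sum_mono) (metis abs_ge_self abs_mult)
  also have "\<dots> \<le> vnorm n x * vnorm n y"
    unfolding vnorm_eq_L2_set by (rule L2_set_mult_ineq)
  finally show ?thesis .
qed

lemma vinner_self: "vinner n x x = (vnorm n x)\<^sup>2"
  by (simp add: vinner_def vnorm_power2[symmetric] power2_eq_square[symmetric])

lemma vdist_vadd_self: "vdist n (vadd n \<mu> \<xi>) \<mu> = vnorm n \<xi>"
  unfolding vdist_def by (intro vnorm_cong) (simp add: vadd_def)

lemma vdist_vadd_left_cancel: "vdist n (vadd n \<mu> x) (vadd n \<mu> y) = vdist n x y"
  unfolding vdist_def by (intro vnorm_cong) (simp add: vadd_def)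

lemma vdist_vadd_right_cancel: "vdist n (vadd n x \<xi>) (vadd n y \<xi>) = vdist n x y"
  unfolding vdist_def by (intro vnorm_cong) (simp add: vadd_def)

lemma vdist_midpoint_parallelogram:
  "(vdist n x y)\<^sup>2 = 2 * (vdist n Y x)\<^sup>2 + 2 * (vdist n Y y)\<^sup>2 - 4 * (vdist n Y (vcomb n (1/2) x y))\<^sup>2"
proof -
  have "(\<Sum>i<n. (x i - y i)\<^sup>2) = (\<Sum>i<n. 2 * (Y i - x i)\<^sup>2 + 2 * (Y i - y i)\<^sup>2
      - 4 * (Y i - vcomb n (1/2) x y i)\<^sup>2)"
    by (intro sum.cong) (simp_all add: vcomb_def power2_eq_square algebra_simps)
  then show ?thesis
    unfolding vdist_power2 by (simp add: sum_subtractf sum.distrib sum_distrib_left)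
qed

lemma tendsto_vdist:
  assumes "\<And>i. i < n \<Longrightarrow> (\<lambda>j. x j i) \<longlonglongrightarrow> z i"
  shows "(\<lambda>j. vdist n y (x j)) \<longlonglongrightarrow> vdist n y z"
  unfolding vdist_def vnorm_def using assms by (intro tendsto_intros) auto

section \<open>Projection onto a convex body\<close>

lemma convex_body_closed:
  "convex_body n K \<Longrightarrow> x \<in> rvec n \<Longrightarrow> (\<And>e. e > 0 \<Longrightarrow> \<exists>y\<in>K. vdist n x y < e) \<Longrightarrow> x \<in> K"
  by (simp add: convex_body_def)

lemma convex_body_bounded: "convex_body n K \<Longrightarrow> \<exists>R. \<forall>x\<in>K. vnorm n x \<le> R"
  by (simp add: convex_body_def)

lemma convex_body_vcomb:
  "convex_body n K \<Longrightarrow> x \<in> K \<Longrightarrow> y \<in> K \<Longrightarrow> 0 \<le> l \<Longrightarrow> l \<le> 1 \<Longrightarrow> vcomb n l x y \<in> K"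
  by (simp add: convex_body_def)

lemma convex_body_nonempty: "convex_body n K \<Longrightarrow> K \<noteq> {}"
  by (auto simp add: convex_body_def)

lemma convex_body_mem_of_tendsto:
  assumes K: "convex_body n K" and x: "\<And>j. x j \<in> K"
    and lim: "\<And>i. i < n \<Longrightarrow> (\<lambda>j. x j i) \<longlonglongrightarrow> z i" and z: "z \<in> rvec n"
  shows "z \<in> K"
proof (rule convex_body_closed[OF K z])
  fix e :: real assume "e > 0"
  have "(\<lambda>j. vdist n z (x j)) \<longlonglongrightarrow> vdist n z z"
    using lim by (rule tendsto_vdist)
  from order_tendstoD(2)[OF this] \<open>e > 0\<close> obtain j where "vdist n z (x j) < e"
    by (auto simp: eventually_sequentially)
  then show "\<exists>y\<in>K. vdist n z y < e" using x by blast
qed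

text \<open>The parallelogram law, applied with the midpoint of \<open>x\<close> and \<open>y\<close> (again in \<open>K\<close>): nearly
  nearest points are close to each other, so minimising sequences are Cauchy.\<close>

lemma vdist_power2_le_of_nearly_nearest:
  assumes K: "convex_body n K" and x: "x \<in> K" and y: "y \<in> K"
    and \<delta>: "0 \<le> \<delta>" "\<And>z. z \<in> K \<Longrightarrow> \<delta> \<le> vdist n Y z"
    and e: "0 \<le> e" "vdist n Y x \<le> \<delta> + e" "vdist n Y y \<le> \<delta> + e"
  shows "(vdist n x y)\<^sup>2 \<le> 4 * e * (2 * \<delta> + e)"
proof -
  have "\<delta> \<le> vdist n Y (vcomb n (1/2) x y)"
    by (rule \<delta>(2), rule convex_body_vcomb[OF K x y]) auto
  then have "\<delta>\<^sup>2 \<le> (vdist n Y (vcomb n (1/2) x y))\<^sup>2"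
    using \<delta>(1) by (intro power_mono)
  moreover have "(vdist n Y x)\<^sup>2 \<le> (\<delta> + e)\<^sup>2" "(vdist n Y y)\<^sup>2 \<le> (\<delta> + e)\<^sup>2"
    using e by (auto intro!: power_mono)
  ultimately have "(vdist n x y)\<^sup>2 \<le> 4 * (\<delta> + e)\<^sup>2 - 4 * \<delta>\<^sup>2"
    using vdist_midpoint_parallelogram[of n x y Y] by linarith
  also have "\<dots> = 4 * e * (2 * \<delta> + e)"
    by (simp add: power2_eq_square algebra_simps)
  finally show ?thesis .
qed

lemma Cauchy_coord_of_vdist:
  assumes Cauchy: "\<And>e. 0 < e \<Longrightarrow> \<exists>N. \<forall>j\<ge>N. \<forall>l\<ge>N. vdist n (x j) (x l) < e" and i: "i < n"
  shows "Cauchy (\<lambda>j. x j i)"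
proof (rule metric_CauchyI)
  fix e :: real assume "0 < e"
  then obtain N where N: "\<And>j l. j \<ge> N \<Longrightarrow> l \<ge> N \<Longrightarrow> vdist n (x j) (x l) < e"
    using Cauchy by blast
  have "\<bar>x j i - x l i\<bar> \<le> vdist n (x j) (x l)" for j l
    unfolding vdist_def using abs_coord_le_vnorm[OF i, of "\<lambda>i. x j i - x l i"] by simp
  with N show "\<exists>M. \<forall>j\<ge>M. \<forall>l\<ge>M. dist (x j i) (x l i) < e"
    by (metis dist_real_def le_less_trans)
qed

lemma vdist_Cauchy_of_nearly_nearest:
  assumes K: "convex_body n K" and xK: "\<And>j. x j \<in> K"
    and \<delta>_nonneg: "0 \<le> \<delta>" and \<delta>_le: "\<And>z. z \<in> K \<Longrightarrow> \<delta> \<le> vdist n Y z"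
    and x_dist: "\<And>j. vdist n Y (x j) < \<delta> + 1 / Suc j" and "0 < e"
  shows "\<exists>N. \<forall>j\<ge>N. \<forall>l\<ge>N. vdist n (x j) (x l) < e"
proof -
  obtain N :: nat where "4 * (2 * \<delta> + 1) / e\<^sup>2 < N"
    using reals_Archimedean2 by blast
  then have "4 * (2 * \<delta> + 1) < N * e\<^sup>2"
    using \<open>0 < e\<close> by (simp add: pos_divide_less_eq)
  also have "\<dots> \<le> Suc N * e\<^sup>2"
    by (intro mult_right_mono) auto
  finally have N: "4 * (1 / Suc N) * (2 * \<delta> + 1) < e\<^sup>2"
    by (simp add: field_simps)
  have "vdist n (x j) (x l) < e" if "j \<ge> N" "l \<ge> N" for j l
  proof -
    have le: "1 / real (Suc j) \<le> 1 / Suc N" "1 / real (Suc l) \<le> 1 / Suc N"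
      using that by (auto simp: field_simps)
    have "(vdist n (x j) (x l))\<^sup>2 \<le> 4 * (1 / Suc N) * (2 * \<delta> + 1 / Suc N)"
      using x_dist[of j] x_dist[of l] le \<delta>_nonneg \<delta>_le
      by (intro vdist_power2_le_of_nearly_nearest[OF K xK xK]) auto
    also have "\<dots> \<le> 4 * (1 / Suc N) * (2 * \<delta> + 1)"
      by (intro mult_left_mono) auto
    finally have "(vdist n (x j) (x l))\<^sup>2 < e\<^sup>2" using N by linarith
    then show ?thesis using \<open>0 < e\<close> by (meson power_less_imp_less_base less_imp_le)
  qed
  then show ?thesis by blast
qed

lemma nearest_point_exists:
  assumes K: "convex_body n K"
  shows "\<exists>p\<in>K. \<forall>x\<in>K. vdist n Y p \<le> vdist n Y x"
proof -
  define \<delta> where "\<delta> = (INF x\<in>K. vdist n Y x)"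
  have bdd: "bdd_below (vdist n Y ` K)" by (rule bdd_belowI[of _ 0]) auto
  have \<delta>_le: "\<delta> \<le> vdist n Y x" if "x \<in> K" for x
    unfolding \<delta>_def using bdd that by (rule cINF_lower)
  have \<delta>_nonneg: "0 \<le> \<delta>"
    unfolding \<delta>_def using convex_body_nonempty[OF K] by (intro cINF_greatest) auto
  have "\<exists>x\<in>K. vdist n Y x < \<delta> + 1 / Suc j" for j :: nat
    using cInf_lessD[of "vdist n Y ` K" "\<delta> + 1 / Suc j"] convex_body_nonempty[OF K]
    by (auto simp: \<delta>_def bdd)
  then obtain x where xK: "\<And>j. x j \<in> K" and x_dist: "\<And>j. vdist n Y (x j) < \<delta> + 1 / Suc j"
    by metis
  have "\<exists>N. \<forall>j\<ge>N. \<forall>l\<ge>N. vdist n (x j) (x l) < e" if "0 < e" for e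
    using K xK \<delta>_nonneg \<delta>_le x_dist that by (rule vdist_Cauchy_of_nearly_nearest)
  then have Cauchy: "Cauchy (\<lambda>j. x j i)" if "i < n" for i
    using that by (rule Cauchy_coord_of_vdist)
  define z where "z = (\<lambda>i\<in>{..<n}. lim (\<lambda>j. x j i))"
  have lim: "(\<lambda>j. x j i) \<longlonglongrightarrow> z i" if "i < n" for i
    using Cauchy[OF that] that by (simp add: z_def Cauchy_convergent_iff convergent_LIMSEQ_iff)
  have zK: "z \<in> K"
    by (rule convex_body_mem_of_tendsto[OF K xK lim]) (simp_all add: z_def rvec_def del: restrict_apply)
  have "(\<lambda>j. vdist n Y (x j)) \<longlonglongrightarrow> vdist n Y z"
    using lim by (rule tendsto_vdist)
  moreover have "(\<lambda>j. \<delta> + 1 / real (Suc j)) \<longlonglongrightarrow> \<delta> + 0"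
    by (intro tendsto_intros LIMSEQ_Suc[OF lim_inverse_n[unfolded inverse_eq_divide]])
  ultimately have "vdist n Y z \<le> \<delta>"
    using x_dist by (intro LIMSEQ_le) (auto intro: less_imp_le)
  then show ?thesis using zK \<delta>_le by (meson order_trans)
qed

lemma
  assumes K: "convex_body n K"
  shows lse_mem: "lse n K Y \<in> K"
    and lse_nearest: "x \<in> K \<Longrightarrow> vdist n Y (lse n K Y) \<le> vdist n Y x"
proof -
  obtain p where "p \<in> K" "\<forall>x\<in>K. vdist n Y p \<le> vdist n Y x"
    using nearest_point_exists[OF K] by blast
  then have "\<exists>\<nu>. \<nu> \<in> K \<and> (\<forall>\<nu>'\<in>K. (vdist n Y \<nu>)\<^sup>2 \<le> (vdist n Y \<nu>')\<^sup>2)"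
    by (auto intro: power_mono)
  from someI_ex[OF this]
  have "lse n K Y \<in> K \<and> (\<forall>\<nu>'\<in>K. (vdist n Y (lse n K Y))\<^sup>2 \<le> (vdist n Y \<nu>')\<^sup>2)"
    unfolding lse_def .
  then show "lse n K Y \<in> K" "x \<in> K \<Longrightarrow> vdist n Y (lse n K Y) \<le> vdist n Y x"
    by (auto intro: power2_le_imp_le)
qed

lemma nonpos_of_le_mult_small:
  fixes a b :: real
  assumes le: "\<And>t. 0 < t \<Longrightarrow> t \<le> 1 \<Longrightarrow> 2 * a \<le> t * b"
  shows "a \<le> 0"
proof (rule ccontr)
  assume "\<not> a \<le> 0"
  then have a: "0 < a" by simp
  show False
  proof (cases "b \<le> a")
    case True
    then show False using le[of 1] a by simp
  next
    case False
    then show False using le[of "a / b"] a by simp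
  qed
qed

lemma lse_variational_ineq:
  assumes K: "convex_body n K" and x: "x \<in> K"
  shows "vinner n (\<lambda>i. Y i - lse n K Y i) (\<lambda>i. x i - lse n K Y i) \<le> 0"
proof -
  define p where "p = lse n K Y"
  define u where "u = (\<lambda>i. Y i - p i)"
  define v where "v = (\<lambda>i. x i - p i)"
  have pK: "p \<in> K" unfolding p_def using K by (rule lse_mem)
  have "2 * vinner n u v \<le> t * (\<Sum>i<n. (v i)\<^sup>2)" if t: "0 < t" "t \<le> 1" for t
  proof -
    have "vcomb n t x p \<in> K" using convex_body_vcomb[OF K x pK] t by simp
    then have "vdist n Y p \<le> vdist n Y (vcomb n t x p)"
      using lse_nearest[OF K] by (simp add: p_def)
    then have "(vdist n Y p)\<^sup>2 \<le> (vdist n Y (vcomb n t x p))\<^sup>2"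
      by (intro power_mono) auto
    moreover have "(vdist n Y (vcomb n t x p))\<^sup>2 = (\<Sum>i<n. (u i - t * v i)\<^sup>2)"
      unfolding vdist_power2 by (intro sum.cong) (auto simp: vcomb_def u_def v_def algebra_simps)
    moreover have "(vdist n Y p)\<^sup>2 = (\<Sum>i<n. (u i)\<^sup>2)"
      unfolding vdist_power2 u_def ..
    moreover have "(\<Sum>i<n. (u i - t * v i)\<^sup>2)
        = (\<Sum>i<n. (u i)\<^sup>2) - t * (2 * vinner n u v - t * (\<Sum>i<n. (v i)\<^sup>2))"
      by (simp add: vinner_def power2_eq_square algebra_simps sum.distrib sum_subtractf
          sum_distrib_left)
    ultimately have "0 \<le> t * (t * (\<Sum>i<n. (v i)\<^sup>2) - 2 * vinner n u v)"
      by (simp add: algebra_simps)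
    then show ?thesis using t by (simp add: zero_le_mult_iff)
  qed
  then have "vinner n u v \<le> 0" by (rule nonpos_of_le_mult_small)
  then show ?thesis by (simp add: u_def v_def p_def)
qed

text \<open>If a ball of radius \<open>\<rho>\<close> around \<open>w\<close> lies in \<open>K\<close>, the variational inequality applied to
  the point of the ball farthest in the direction of the residual \<open>Y - lse n K Y\<close> gains \<open>\<rho>\<close> times
  the length of the residual.\<close>

lemma lse_vinner_ball_le:
  assumes K: "convex_body n K" and ball: "ncball n w \<rho> \<subseteq> K" and \<rho>: "0 \<le> \<rho>"
  shows "vinner n (\<lambda>i. Y i - lse n K Y i) (\<lambda>i. w i - lse n K Y i) + \<rho> * vdist n Y (lse n K Y) \<le> 0"
proof -
  define p where "p = lse n K Y"
  define u where "u = (\<lambda>i. Y i - p i)"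
  define \<nu> where "\<nu> = vnorm n u"
  have \<nu>: "vdist n Y p = \<nu>" by (simp add: \<nu>_def u_def vdist_def)
  show ?thesis
  proof (cases "\<nu> = 0")
    case True
    then have "vinner n u (\<lambda>i. w i - p i) \<le> 0"
      using vinner_le_vnorm_mult[of n u] by (simp add: \<nu>_def)
    then show ?thesis using True \<nu> by (simp add: p_def u_def)
  next
    case False
    then have \<nu>_pos: "\<nu> > 0" using vnorm_nonneg[of n u] unfolding \<nu>_def by linarith
    define x where "x = (\<lambda>i\<in>{..<n}. w i + (\<rho> / \<nu>) * u i)"
    have "vdist n x w = vnorm n (\<lambda>i. (\<rho> / \<nu>) * u i)"
      unfolding vdist_def by (intro vnorm_cong) (simp add: x_def)
    also have "\<dots> = \<rho>"
      using \<nu>_pos \<rho> by (subst vnorm_scale) (simp add: \<nu>_def[symmetric])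
    moreover have "x \<in> rvec n" by (simp add: x_def rvec_def del: restrict_apply)
    ultimately have "x \<in> K" using ball by (auto simp: ncball_def)
    then have "vinner n u (\<lambda>i. x i - p i) \<le> 0"
      using lse_variational_ineq[OF K] by (simp add: u_def p_def)
    moreover have "vinner n u (\<lambda>i. x i - p i) = vinner n u (\<lambda>i. w i - p i) + \<rho> * \<nu>"
    proof -
      have "vinner n u (\<lambda>i. x i - p i) = vinner n u (\<lambda>i. (w i - p i) + (\<rho> / \<nu>) * u i)"
        by (intro vinner_cong) (simp_all add: x_def)
      also have "\<dots> = vinner n u (\<lambda>i. w i - p i) + (\<rho> / \<nu>) * vinner n u u"
        unfolding vinner_def sum_distrib_left sum.distrib[symmetric]
        by (intro sum.cong) (simp_all add: algebra_simps)
      finally show ?thesis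
        using \<nu>_pos by (simp add: vinner_self \<nu>_def[symmetric] power2_eq_square)
    qed
    ultimately show ?thesis using \<nu> by (simp add: p_def u_def)
  qed
qed

lemma strongly_convex_midpoint_ball:
  assumes "strongly_convex n k K" and "a \<in> K" and "b \<in> K"
  shows "ncball n (vcomb n (1/2) a b) (k * (vdist n a b)\<^sup>2 / 4) \<subseteq> K"
proof -
  have "(1/2::real) \<in> {0..1}" by simp
  with assms have "ncball n (vcomb n (1/2) a b) (k * (1/2) * (1 - 1/2) * (vdist n a b)\<^sup>2) \<subseteq> K"
    unfolding strongly_convex_def by blast
  then show ?thesis by simp
qed

lemma lse_vinner_le_strongly_convex:
  assumes K: "convex_body n K" and SC: "strongly_convex n k K" and k: "0 \<le> k" and z: "z \<in> K"
  shows "vinner n (\<lambda>i. Y i - lse n K Y i) (\<lambda>i. z i - lse n K Y i)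
           \<le> - (k / 2) * vdist n Y (lse n K Y) * (vdist n z (lse n K Y))\<^sup>2"
proof -
  define p where "p = lse n K Y"
  define \<rho> where "\<rho> = k * (vdist n p z)\<^sup>2 / 4"
  have "ncball n (vcomb n (1/2) p z) \<rho> \<subseteq> K"
    unfolding p_def \<rho>_def using SC lse_mem[OF K] z by (rule strongly_convex_midpoint_ball)
  from lse_vinner_ball_le[OF K this] k
  have "vinner n (\<lambda>i. Y i - p i) (\<lambda>i. vcomb n (1/2) p z i - p i) + \<rho> * vdist n Y p \<le> 0"
    by (simp add: p_def \<rho>_def)
  moreover have "vinner n (\<lambda>i. Y i - p i) (\<lambda>i. vcomb n (1/2) p z i - p i)
      = vinner n (\<lambda>i. Y i - p i) (\<lambda>i. z i - p i) / 2"
    unfolding vinner_def sum_divide_distrib by (intro sum.cong) (auto simp: vcomb_def field_simps)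
  ultimately show ?thesis
    by (simp add: \<rho>_def p_def vdist_commute algebra_simps)
qed

lemma lse_dist_ge_min_of_ball:
  assumes K: "convex_body n K" and ball: "ncball n m r \<subseteq> K" and r: "0 \<le> r"
  shows "min (vdist n Y m) r \<le> vdist n (lse n K Y) m"
proof -
  define p where "p = lse n K Y"
  define u where "u = (\<lambda>i. Y i - p i)"
  have \<nu>: "vdist n Y p = vnorm n u" by (simp add: u_def vdist_def)
  have "r * vnorm n u \<le> - vinner n u (\<lambda>i. m i - p i)"
    using lse_vinner_ball_le[OF K ball r, of Y] \<nu> by (simp add: p_def u_def)
  also have "\<dots> = vinner n u (\<lambda>i. p i - m i)"
    by (simp add: vinner_def sum_negf[symmetric] algebra_simps)
  also have "\<dots> \<le> vnorm n u * vdist n p m"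
    using vinner_le_vnorm_mult[of n u] by (simp add: vdist_def)
  finally have ru: "r * vnorm n u \<le> vnorm n u * vdist n p m" .
  show ?thesis
  proof (cases "vnorm n u = 0")
    case True
    then have "vdist n Y m = vdist n p m"
      unfolding vdist_def by (intro vnorm_cong) (simp add: vnorm_eq_0_iff u_def)
    then show ?thesis by (simp add: p_def)
  next
    case False
    then have "r \<le> vdist n p m"
      using ru vnorm_nonneg[of n u] by (simp add: mult.commute)
    then show ?thesis by (simp add: p_def)
  qed
qed

lemma vdist_mult_le_of_vinner:
  assumes p: "vinner n (\<lambda>i. y i - p i) (\<lambda>i. q i - p i) \<le> - a * (vdist n p q)\<^sup>2"
    and q: "vinner n (\<lambda>i. y' i - q i) (\<lambda>i. p i - q i) \<le> - b * (vdist n p q)\<^sup>2"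
  shows "vdist n p q * (1 + a + b) \<le> vdist n y y'"
proof -
  define D where "D = vdist n p q"
  have "vinner n (\<lambda>i. y i - p i) (\<lambda>i. q i - p i) + vinner n (\<lambda>i. y' i - q i) (\<lambda>i. p i - q i)
      = D\<^sup>2 - vinner n (\<lambda>i. p i - q i) (\<lambda>i. y i - y' i)"
    unfolding D_def vdist_power2 vinner_def
    by (simp add: sum.distrib[symmetric] sum_subtractf[symmetric] power2_eq_square algebra_simps)
  moreover have "vinner n (\<lambda>i. p i - q i) (\<lambda>i. y i - y' i) \<le> D * vdist n y y'"
    using vinner_le_vnorm_mult[of n "\<lambda>i. p i - q i"] by (simp add: D_def vdist_def)
  ultimately have "D * (D * (1 + a + b)) \<le> D * vdist n y y'"
    using p q unfolding D_def[symmetric] by (simp add: power2_eq_square algebra_simps)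
  moreover have "0 \<le> D" by (simp add: D_def)
  ultimately show ?thesis
    by (cases "D = 0") (simp_all add: D_def[symmetric])
qed

lemma lse_nonexpansive:
  assumes K: "convex_body n K"
  shows "vdist n (lse n K Y) (lse n K Y') \<le> vdist n Y Y'"
  using vdist_mult_le_of_vinner[of n Y "lse n K Y" "lse n K Y'" 0 Y' 0]
    lse_variational_ineq[OF K lse_mem[OF K]] by simp

lemma lse_dist_mult_le_strongly_convex:
  assumes K: "convex_body n K" and SC: "strongly_convex n k K" and k: "0 \<le> k"
  shows "vdist n (lse n K Y) (lse n K Y') * (1 + (k/2) * (vdist n Y (lse n K Y) + vdist n Y' (lse n K Y')))
           \<le> vdist n Y Y'"
proof -
  define p q where "p = lse n K Y" and "q = lse n K Y'"
  have "vinner n (\<lambda>i. Y i - p i) (\<lambda>i. q i - p i) \<le> - ((k/2) * vdist n Y p) * (vdist n p q)\<^sup>2"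
    using lse_vinner_le_strongly_convex[OF K SC k lse_mem[OF K, of Y'], of Y]
    by (simp add: p_def q_def vdist_commute)
  moreover have "vinner n (\<lambda>i. Y' i - q i) (\<lambda>i. p i - q i) \<le> - ((k/2) * vdist n Y' q) * (vdist n p q)\<^sup>2"
    using lse_vinner_le_strongly_convex[OF K SC k lse_mem[OF K, of Y], of Y'] by (simp add: p_def q_def)
  ultimately have "vdist n p q * (1 + (k/2) * vdist n Y p + (k/2) * vdist n Y' q) \<le> vdist n Y Y'"
    by (rule vdist_mult_le_of_vinner)
  then show ?thesis by (simp add: p_def q_def algebra_simps)
qed

lemma bdd_above_vdist_pairs:
  assumes K: "convex_body n K"
  shows "bdd_above {vdist n \<mu> \<nu> | \<mu> \<nu>. \<mu> \<in> K \<and> \<nu> \<in> K}"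
proof -
  obtain R where R: "\<And>x. x \<in> K \<Longrightarrow> vnorm n x \<le> R"
    using convex_body_bounded[OF K] by blast
  have "vdist n \<mu> \<nu> \<le> 2 * R" if "\<mu> \<in> K" "\<nu> \<in> K" for \<mu> \<nu>
  proof -
    have "vdist n \<mu> \<nu> \<le> vnorm n \<mu> + vnorm n \<nu>"
      using vnorm_add_le[of n \<mu> "\<lambda>i. - \<nu> i"] by (simp add: vdist_def vnorm_def)
    then show ?thesis using R[OF \<open>\<mu> \<in> K\<close>] R[OF \<open>\<nu> \<in> K\<close>] by linarith
  qed
  then show ?thesis by (intro bdd_aboveI[of _ "2 * R"]) blast
qed

lemma vdist_le_diam: "convex_body n K \<Longrightarrow> x \<in> K \<Longrightarrow> y \<in> K \<Longrightarrow> vdist n x y \<le> diam n K"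
  unfolding diam_def by (rule cSup_upper[OF _ bdd_above_vdist_pairs]) auto

lemma vnorm_scaled_first_unit:
  assumes "0 < n"
  shows "vnorm n (\<lambda>i. if i = 0 then t else 0) = \<bar>t\<bar>"
proof -
  have "(\<Sum>i<n. (if i = 0 then t else 0)\<^sup>2) = (\<Sum>i<n. if i = 0 then t\<^sup>2 else 0)"
    by (intro sum.cong) auto
  then show ?thesis using assms by (simp add: vnorm_def)
qed

lemma diam_ge_two_radius:
  assumes K: "convex_body n K" and n: "0 < n" and r: "0 \<le> r" and ball: "ncball n m r \<subseteq> K"
  shows "2 * r \<le> diam n K"
proof -
  define e where "e t = (\<lambda>i\<in>{..<n}. m i + (if i = 0 then t else 0))" for t
  have dist_e: "vdist n (e t) (e s) = \<bar>t - s\<bar>" for t s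
    using vnorm_scaled_first_unit[OF n, of "t - s"] unfolding vdist_def
    by (subst vnorm_cong[where y = "\<lambda>i. if i = 0 then t - s else 0"]) (auto simp: e_def)
  have "e t \<in> K" if "\<bar>t\<bar> \<le> r" for t
  proof -
    have "vdist n (e t) (e 0) \<le> r" using that by (simp add: dist_e)
    moreover have "vdist n (e t) (e 0) = vdist n (e t) m"
      unfolding vdist_def by (intro vnorm_cong) (simp add: e_def)
    moreover have "e t \<in> rvec n" by (simp add: e_def rvec_def del: restrict_apply)
    ultimately show ?thesis using ball by (auto simp: ncball_def)
  qed
  then have "vdist n (e r) (e (- r)) \<le> diam n K"
    using r by (intro vdist_le_diam[OF K]) auto
  then show ?thesis using r by (simp add: dist_e)
qed

lemma diam_pos:
  assumes K: "convex_body n K" and n: "0 < n"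
  shows "0 < diam n K"
proof -
  obtain x r where "0 < r" "ncball n x r \<subseteq> K"
    using K by (auto simp: convex_body_def)
  then have "2 * r \<le> diam n K" by (intro diam_ge_two_radius[OF K n]) auto
  with \<open>0 < r\<close> show ?thesis by linarith
qed

lemma exists_vdist_gt_half_diam:
  assumes K: "convex_body n K" and n: "0 < n"
  shows "\<exists>a\<in>K. \<exists>b\<in>K. diam n K / 2 < vdist n a b"
proof -
  have "diam n K / 2 < Sup {vdist n \<mu> \<nu> | \<mu> \<nu>. \<mu> \<in> K \<and> \<nu> \<in> K}"
    using diam_pos[OF K n] by (simp add: diam_def)
  moreover have "{vdist n \<mu> \<nu> | \<mu> \<nu>. \<mu> \<in> K \<and> \<nu> \<in> K} \<noteq> {}"
    using convex_body_nonempty[OF K] by blast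
  ultimately show ?thesis using less_cSup_iff[OF _ bdd_above_vdist_pairs[OF K]] by blast
qed

section \<open>Gaussian noise\<close>

lemma prob_space_gauss: "0 < \<sigma> \<Longrightarrow> prob_space (gauss n \<sigma>)"
  unfolding gauss_def by (intro prob_space_PiM prob_space_normal_density)

lemma normal_even_moment:
  assumes "0 < \<sigma>"
  shows "has_bochner_integral (density lborel (normal_density 0 \<sigma>)) (\<lambda>x. x ^ (2 * k))
           (fact (2 * k) / ((2 / \<sigma>\<^sup>2) ^ k * fact k))"
  using normal_moment_even[of \<sigma> 0 k] assms by (intro has_bochner_integral_density) auto

lemma
  assumes "0 < \<sigma>"
  shows integrable_normal_power2: "integrable (density lborel (normal_density 0 \<sigma>)) (\<lambda>x. x\<^sup>2)"
    and integral_normal_power2: "(\<integral>x. x\<^sup>2 \<partial>density lborel (normal_density 0 \<sigma>)) = \<sigma>\<^sup>2"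
    and integrable_normal_power4: "integrable (density lborel (normal_density 0 \<sigma>)) (\<lambda>x. x ^ 4)"
    and integral_normal_power4: "(\<integral>x. x ^ 4 \<partial>density lborel (normal_density 0 \<sigma>)) = 3 * \<sigma> ^ 4"
proof -
  have "has_bochner_integral (density lborel (normal_density 0 \<sigma>)) (\<lambda>x. x\<^sup>2) (\<sigma>\<^sup>2)"
    using normal_even_moment[OF assms, of 1] by (simp add: fact_numeral)
  moreover have "has_bochner_integral (density lborel (normal_density 0 \<sigma>)) (\<lambda>x. x ^ 4) (3 * \<sigma> ^ 4)"
    using normal_even_moment[OF assms, of 2] assms
    by (simp add: fact_numeral power_divide field_simps flip: power_mult)
  ultimately show "integrable (density lborel (normal_density 0 \<sigma>)) (\<lambda>x. x\<^sup>2)"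
    "(\<integral>x. x\<^sup>2 \<partial>density lborel (normal_density 0 \<sigma>)) = \<sigma>\<^sup>2"
    "integrable (density lborel (normal_density 0 \<sigma>)) (\<lambda>x. x ^ 4)"
    "(\<integral>x. x ^ 4 \<partial>density lborel (normal_density 0 \<sigma>)) = 3 * \<sigma> ^ 4"
    by (simp_all add: has_bochner_integral_iff)
qed

lemma
  fixes g :: "real \<Rightarrow> real"
  assumes \<sigma>: "0 < \<sigma>" and i: "i < n" and g: "g \<in> borel_measurable borel"
  shows integrable_gauss_coord:
      "integrable (gauss n \<sigma>) (\<lambda>x. g (x i)) \<longleftrightarrow> integrable (density lborel (normal_density 0 \<sigma>)) g"
    and integral_gauss_coord:
      "(\<integral>x. g (x i) \<partial>gauss n \<sigma>) = (\<integral>x. g x \<partial>density lborel (normal_density 0 \<sigma>))"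
proof -
  let ?N = "density lborel (normal_density 0 \<sigma>)"
  have coord: "(\<lambda>x. x i) \<in> measurable (gauss n \<sigma>) ?N"
    unfolding gauss_def using i by (intro measurable_component_singleton) auto
  have distr: "distr (gauss n \<sigma>) ?N (\<lambda>x. x i) = ?N"
    unfolding gauss_def using i \<sigma> by (intro distr_PiM_component prob_space_normal_density) auto
  have g': "g \<in> borel_measurable ?N" using g by simp
  show "integrable (gauss n \<sigma>) (\<lambda>x. g (x i)) \<longleftrightarrow> integrable ?N g"
    using integrable_distr_eq[OF coord g'] by (simp add: distr)
  show "(\<integral>x. g (x i) \<partial>gauss n \<sigma>) = (\<integral>x. g x \<partial>?N)"
    using integral_distr[OF coord g'] by (simp add: distr)
qed

lemma measurable_gauss_coord [measurable]: "i < n \<Longrightarrow> (\<lambda>x. x i) \<in> borel_measurable (gauss n \<sigma>)"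
  unfolding gauss_def using measurable_component_singleton[of i "{..<n}"] by (simp cong: measurable_cong_sets)

lemma
  assumes \<sigma>: "0 < \<sigma>"
  shows integrable_gauss_vnorm_power2: "integrable (gauss n \<sigma>) (\<lambda>\<xi>. (vnorm n \<xi>)\<^sup>2)"
    and integral_gauss_vnorm_power2: "(\<integral>\<xi>. (vnorm n \<xi>)\<^sup>2 \<partial>gauss n \<sigma>) = n * \<sigma>\<^sup>2"
    and integrable_gauss_vnorm_power4: "integrable (gauss n \<sigma>) (\<lambda>\<xi>. (vnorm n \<xi>) ^ 4)"
    and integral_gauss_vnorm_power4_le: "(\<integral>\<xi>. (vnorm n \<xi>) ^ 4 \<partial>gauss n \<sigma>) \<le> 3 * (n * \<sigma>\<^sup>2)\<^sup>2"
proof -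
  have int2: "integrable (gauss n \<sigma>) (\<lambda>\<xi>. (\<xi> i)\<^sup>2)" "(\<integral>\<xi>. (\<xi> i)\<^sup>2 \<partial>gauss n \<sigma>) = \<sigma>\<^sup>2"
    if "i \<in> {..<n}" for i
    using that integrable_gauss_coord[OF \<sigma>, of i n "\<lambda>x. x\<^sup>2"] integral_gauss_coord[OF \<sigma>, of i n "\<lambda>x. x\<^sup>2"]
      integrable_normal_power2[OF \<sigma>] integral_normal_power2[OF \<sigma>] by auto
  have int4: "integrable (gauss n \<sigma>) (\<lambda>\<xi>. (\<xi> i) ^ 4)" "(\<integral>\<xi>. (\<xi> i) ^ 4 \<partial>gauss n \<sigma>) = 3 * \<sigma> ^ 4"
    if "i \<in> {..<n}" for i
    using that integrable_gauss_coord[OF \<sigma>, of i n "\<lambda>x. x ^ 4"] integral_gauss_coord[OF \<sigma>, of i n "\<lambda>x. x ^ 4"]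
      integrable_normal_power4[OF \<sigma>] integral_normal_power4[OF \<sigma>] by auto
  show "integrable (gauss n \<sigma>) (\<lambda>\<xi>. (vnorm n \<xi>)\<^sup>2)"
    unfolding vnorm_power2 using int2 by (auto intro!: integrable_sum)
  show "(\<integral>\<xi>. (vnorm n \<xi>)\<^sup>2 \<partial>gauss n \<sigma>) = n * \<sigma>\<^sup>2"
    unfolding vnorm_power2 using int2 by (simp add: integral_sum)
  have power4_le: "(vnorm n \<xi>) ^ 4 \<le> n * (\<Sum>i<n. (\<xi> i) ^ 4)" for \<xi> :: "nat \<Rightarrow> real"
    using sum_squared_le_sum_of_squares[of "\<lambda>i. (\<xi> i)\<^sup>2" "{..<n}"]
    by (simp add: vnorm_power2[symmetric] mult.commute flip: power_mult)
  have int_sum4: "integrable (gauss n \<sigma>) (\<lambda>\<xi>. n * (\<Sum>i<n. (\<xi> i) ^ 4))"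
    using int4 by (auto intro!: integrable_mult_right integrable_sum)
  show int_vnorm4: "integrable (gauss n \<sigma>) (\<lambda>\<xi>. (vnorm n \<xi>) ^ 4)"
  proof (rule Bochner_Integration.integrable_bound[OF int_sum4])
    show "(\<lambda>\<xi>. (vnorm n \<xi>) ^ 4) \<in> borel_measurable (gauss n \<sigma>)"
      unfolding vnorm_def by measurable
    show "AE \<xi> in gauss n \<sigma>. norm ((vnorm n \<xi>) ^ 4) \<le> norm (n * (\<Sum>i<n. (\<xi> i) ^ 4))"
      using power4_le by (intro AE_I2) (simp add: sum_nonneg)
  qed
  have "(\<integral>\<xi>. (vnorm n \<xi>) ^ 4 \<partial>gauss n \<sigma>) \<le> (\<integral>\<xi>. n * (\<Sum>i<n. (\<xi> i) ^ 4) \<partial>gauss n \<sigma>)"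
    using int_vnorm4 int_sum4 power4_le by (rule integral_mono)
  also have "\<dots> = 3 * (n * \<sigma>\<^sup>2)\<^sup>2"
    using int4 by (simp add: integral_sum power2_eq_square power4_eq_xxxx)
  finally show "(\<integral>\<xi>. (vnorm n \<xi>) ^ 4 \<partial>gauss n \<sigma>) \<le> 3 * (n * \<sigma>\<^sup>2)\<^sup>2" .
qed

text \<open>The quadratic \<open>X - X\<^sup>2 / (8 * V) - V / 4\<close> is at most \<open>7 * V / 4\<close> and is negative for
  \<open>X < V / 4\<close>.\<close>

lemma threshold_quadratic_minorant:
  fixes X V L y :: real
  assumes V: "0 < V" and L: "0 \<le> L" and y: "0 \<le> y" and large: "V / 4 \<le> X \<Longrightarrow> L \<le> y"
  shows "4 * L / (7 * V) * (X - X\<^sup>2 / (8 * V) - V / 4) \<le> y"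
proof (cases "V / 4 \<le> X")
  case True
  have "8 * V * X - X\<^sup>2 \<le> 16 * V\<^sup>2"
    using zero_le_power2[of "X - 4 * V"] by (simp add: power2_eq_square algebra_simps)
  then have "X - X\<^sup>2 / (8 * V) - V / 4 \<le> 7 * V / 4"
    using V by (simp add: field_simps power2_eq_square)
  then have "4 * L / (7 * V) * (X - X\<^sup>2 / (8 * V) - V / 4) \<le> 4 * L / (7 * V) * (7 * V / 4)"
    using V L by (intro mult_left_mono) auto
  also have "\<dots> = L" using V by simp
  finally show ?thesis using large[OF True] by linarith
next
  case False
  moreover have "0 \<le> X\<^sup>2 / (8 * V)" using V by simp
  ultimately have "X - X\<^sup>2 / (8 * V) - V / 4 \<le> 0" by linarith
  then have "4 * L / (7 * V) * (X - X\<^sup>2 / (8 * V) - V / 4) \<le> 0"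
    using V L by (intro mult_nonneg_nonpos) auto
  then show ?thesis using y by linarith
qed

lemma (in prob_space) expectation_ge_of_threshold:
  fixes X f :: "'a \<Rightarrow> real"
  assumes X: "integrable M X" "integrable M (\<lambda>x. (X x)\<^sup>2)"
    and V: "expectation X = V" "0 < V" and second: "expectation (\<lambda>x. (X x)\<^sup>2) \<le> 3 * V\<^sup>2"
    and f: "integrable M f" "\<And>x. x \<in> space M \<Longrightarrow> 0 \<le> f x"
      "\<And>x. x \<in> space M \<Longrightarrow> V / 4 \<le> X x \<Longrightarrow> L \<le> f x"
    and L: "0 \<le> L"
  shows "3 * L / 14 \<le> expectation f"
proof -
  define C where "C = 4 * L / (7 * V)"
  have C: "0 \<le> C" using L V by (simp add: C_def)
  have int_q: "integrable M (\<lambda>x. C * (X x - (X x)\<^sup>2 / (8 * V) - V / 4))"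
    using X by auto
  have "3 * L / 14 = C * (V - 3 * V\<^sup>2 / (8 * V) - V / 4)"
    using V by (simp add: C_def power2_eq_square field_simps)
  also have "\<dots> \<le> C * (V - expectation (\<lambda>x. (X x)\<^sup>2) / (8 * V) - V / 4)"
    using second C V by (intro mult_left_mono) (auto simp: divide_right_mono)
  also have "\<dots> = expectation (\<lambda>x. C * (X x - (X x)\<^sup>2 / (8 * V) - V / 4))"
    using X V by (simp add: prob_space)
  also have "\<dots> \<le> expectation f"
    using int_q f(1) by (rule integral_mono)
      (use threshold_quadratic_minorant[OF V(2) L] f(2,3) in \<open>simp add: C_def\<close>)
  finally show ?thesis .
qed

lemma gauss_integral_ge_of_large_noise:
  fixes f :: "(nat \<Rightarrow> real) \<Rightarrow> real"
  assumes \<sigma>: "0 < \<sigma>" and n: "0 < n" and f: "integrable (gauss n \<sigma>) f" "\<And>\<xi>. 0 \<le> f \<xi>"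
    and large: "\<And>\<xi>. \<sigma> * sqrt n / 2 \<le> vnorm n \<xi> \<Longrightarrow> L \<le> f \<xi>" and L: "0 \<le> L"
  shows "3 * L / 14 \<le> (\<integral>\<xi>. f \<xi> \<partial>gauss n \<sigma>)"
proof -
  interpret prob_space "gauss n \<sigma>" using \<sigma> by (rule prob_space_gauss)
  have power4: "(\<lambda>\<xi>. ((vnorm n \<xi>)\<^sup>2)\<^sup>2) = (\<lambda>\<xi>. (vnorm n \<xi>) ^ 4)"
    by (simp flip: power_mult)
  have "L \<le> f \<xi>" if "n * \<sigma>\<^sup>2 / 4 \<le> (vnorm n \<xi>)\<^sup>2" for \<xi>
  proof (rule large, rule power2_le_imp_le)
    show "(\<sigma> * sqrt n / 2)\<^sup>2 \<le> (vnorm n \<xi>)\<^sup>2"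
      using that by (simp add: power_divide power_mult_distrib mult.commute)
  qed simp
  then show ?thesis
    using integrable_gauss_vnorm_power2[OF \<sigma>] integral_gauss_vnorm_power2[OF \<sigma>]
      integrable_gauss_vnorm_power4[OF \<sigma>] integral_gauss_vnorm_power4_le[OF \<sigma>] \<sigma> n f L
    by (intro expectation_ge_of_threshold[where X = "\<lambda>\<xi>. (vnorm n \<xi>)\<^sup>2" and V = "n * \<sigma>\<^sup>2"])
      (simp_all add: power4)
qed

section \<open>Risk of the least squares estimator\<close>

lemma continuous_on_of_coord_lipschitz:
  fixes g :: "(nat \<Rightarrow> real) \<Rightarrow> real"
  assumes lip: "\<And>y z. \<bar>g y - g z\<bar> \<le> C * (\<Sum>i<n. \<bar>y i - z i\<bar>)"
  shows "continuous_on UNIV g"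
proof (rule continuous_at_imp_continuous_on, intro ballI)
  fix z :: "nat \<Rightarrow> real"
  define S where "S y = C * (\<Sum>i<n. \<bar>y i - z i\<bar>)" for y :: "nat \<Rightarrow> real"
  have "continuous_on UNIV S"
    unfolding S_def by (intro continuous_intros continuous_on_product_coordinates)
  then have "isCont S z" by (simp add: continuous_on_eq_continuous_at)
  then have "(S \<longlongrightarrow> 0) (at z)" by (simp add: isCont_def S_def)
  then have "((\<lambda>y. g y - g z) \<longlongrightarrow> 0) (at z)"
    by (rule Lim_null_comparison[rotated]) (auto simp: S_def lip intro!: always_eventually)
  then show "isCont g z" by (simp add: isCont_def LIM_zero_iff)
qed

lemma borel_measurable_PiM_of_coord_lipschitz:
  fixes g :: "(nat \<Rightarrow> real) \<Rightarrow> real"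
  assumes M: "sets M = sets borel" and lip: "\<And>y z. \<bar>g y - g z\<bar> \<le> C * (\<Sum>i<n. \<bar>y i - z i\<bar>)"
  shows "g \<in> borel_measurable (PiM {..<n} (\<lambda>_. M))"
proof -
  define trunc :: "(nat \<Rightarrow> real) \<Rightarrow> nat \<Rightarrow> real" where "trunc y i = (if i < n then y i else 0)" for y i
  have "trunc \<in> borel_measurable (PiM {..<n} (\<lambda>_. M))"
    unfolding trunc_def
  proof (rule measurable_coordinatewise_then_product)
    fix i
    have "i < n \<Longrightarrow> (\<lambda>y. y i) \<in> measurable (PiM {..<n} (\<lambda>_. M)) borel"
      using measurable_component_singleton[of i "{..<n}" "\<lambda>_. M"] M
      by (simp cong: measurable_cong_sets)
    then show "(\<lambda>y. if i < n then y i else 0) \<in> borel_measurable (PiM {..<n} (\<lambda>_. M))"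
      by (cases "i < n") simp_all
  qed
  moreover have "g \<in> borel_measurable borel"
    using continuous_on_of_coord_lipschitz[OF lip] by (rule borel_measurable_continuous_onI)
  ultimately have "g \<circ> trunc \<in> borel_measurable (PiM {..<n} (\<lambda>_. M))"
    by (rule measurable_comp)
  moreover have "g (trunc y) = g y" for y
    using lip[of "trunc y" y] by (simp add: trunc_def)
  ultimately show ?thesis by (simp add: comp_def)
qed

lemma integrable_risk_integrand:
  assumes K: "convex_body n K" and \<mu>: "\<mu> \<in> K" and \<sigma>: "0 < \<sigma>"
  shows "integrable (gauss n \<sigma>) (\<lambda>\<xi>. (vdist n (lse n K (vadd n \<mu> \<xi>)) \<mu>)\<^sup>2)"
proof -
  interpret prob_space "gauss n \<sigma>" using \<sigma> by (rule prob_space_gauss)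
  define e where "e \<xi> = vdist n (lse n K (vadd n \<mu> \<xi>)) \<mu>" for \<xi>
  have e_le: "e \<xi> \<le> diam n K" for \<xi>
    unfolding e_def using K lse_mem[OF K] \<mu> by (rule vdist_le_diam)
  have e_lip: "\<bar>e y - e z\<bar> \<le> (\<Sum>i<n. \<bar>y i - z i\<bar>)" for y z
  proof -
    have "\<bar>e y - e z\<bar> \<le> vdist n (lse n K (vadd n \<mu> y)) (lse n K (vadd n \<mu> z))"
      using vdist_triangle[of n "lse n K (vadd n \<mu> y)" \<mu> "lse n K (vadd n \<mu> z)"]
        vdist_triangle[of n "lse n K (vadd n \<mu> z)" \<mu> "lse n K (vadd n \<mu> y)"]
      by (auto simp: e_def vdist_commute abs_le_iff)
    also have "\<dots> \<le> vdist n (vadd n \<mu> y) (vadd n \<mu> z)"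
      by (rule lse_nonexpansive[OF K])
    also have "\<dots> = vdist n y z"
      by (rule vdist_vadd_left_cancel)
    also have "\<dots> \<le> (\<Sum>i<n. \<bar>y i - z i\<bar>)"
      unfolding vdist_def by (rule vnorm_le_sum_abs)
    finally show ?thesis .
  qed
  have "\<bar>(e y)\<^sup>2 - (e z)\<^sup>2\<bar> \<le> 2 * diam n K * (\<Sum>i<n. \<bar>y i - z i\<bar>)" for y z
  proof -
    have "(e y)\<^sup>2 - (e z)\<^sup>2 = (e y - e z) * (e y + e z)"
      by (simp add: power2_eq_square algebra_simps)
    then have "\<bar>(e y)\<^sup>2 - (e z)\<^sup>2\<bar> = \<bar>e y - e z\<bar> * (e y + e z)"
      by (simp add: abs_mult e_def)
    also have "\<dots> \<le> (\<Sum>i<n. \<bar>y i - z i\<bar>) * (2 * diam n K)"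
      using e_lip e_le[of y] e_le[of z] by (intro mult_mono) (auto simp: e_def)
    finally show ?thesis by (simp add: mult.commute)
  qed
  then have "(\<lambda>\<xi>. (e \<xi>)\<^sup>2) \<in> borel_measurable (gauss n \<sigma>)"
    unfolding gauss_def by (intro borel_measurable_PiM_of_coord_lipschitz) auto
  moreover have "AE \<xi> in gauss n \<sigma>. norm ((e \<xi>)\<^sup>2) \<le> (diam n K)\<^sup>2"
    using e_le by (intro AE_I2) (simp add: e_def power_mono)
  ultimately show ?thesis
    unfolding e_def by (intro integrable_const_bound)
qed

lemma risk_le_diam_power2:
  assumes K: "convex_body n K" and \<mu>: "\<mu> \<in> K" and \<sigma>: "0 < \<sigma>"
  shows "risk n K \<sigma> \<mu> \<le> (diam n K)\<^sup>2"
proof -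
  interpret prob_space "gauss n \<sigma>" using \<sigma> by (rule prob_space_gauss)
  show ?thesis
    unfolding risk_def using integrable_risk_integrand[OF K \<mu> \<sigma>]
    by (rule integral_le_const)
      (intro AE_I2 power_mono vdist_le_diam[OF K lse_mem[OF K] \<mu>] vdist_nonneg)
qed

lemma eps_ge_of_risk_ge:
  assumes K: "convex_body n K" and \<sigma>: "0 < \<sigma>" and \<mu>: "\<mu> \<in> K"
    and risk: "(c * diam n K)\<^sup>2 \<le> risk n K \<sigma> \<mu>"
  shows "c * diam n K \<le> eps n K \<sigma>"
proof -
  have "bdd_above (risk n K \<sigma> ` K)"
    using risk_le_diam_power2[OF K _ \<sigma>] by (intro bdd_aboveI2)
  then have "(c * diam n K)\<^sup>2 \<le> Sup (risk n K \<sigma> ` K)"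
    using risk \<mu> by (meson cSup_upper imageI order_trans)
  then have "sqrt ((c * diam n K)\<^sup>2) \<le> eps n K \<sigma>"
    unfolding eps_def by (rule real_sqrt_le_mono)
  then show ?thesis by simp
qed

text \<open>Two points of \<open>K\<close> pushed by the same large noise: their residuals are long, so by strong
  convexity their projections are closer than the points themselves, and the difference must be
  made up by the two estimation errors.\<close>

lemma lse_errors_ge_of_large_noise:
  assumes K: "convex_body n K" and SC: "strongly_convex n k K" and k: "0 \<le> k"
    and a: "a \<in> K" and b: "b \<in> K" and t: "0 \<le> t" "t \<le> k * D"
    and diam: "diam n K \<le> D / 4" and \<xi>: "D / 2 \<le> vnorm n \<xi>"
  shows "t / (4 + t) * vdist n a b
           \<le> vdist n (lse n K (vadd n a \<xi>)) a + vdist n (lse n K (vadd n b \<xi>)) b"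
proof -
  define p q where "p = lse n K (vadd n a \<xi>)" and "q = lse n K (vadd n b \<xi>)"
  have pK: "p \<in> K" and qK: "q \<in> K" using lse_mem[OF K] by (auto simp: p_def q_def)
  define ea eb where "ea = vdist n p a" and "eb = vdist n q b"
  have ea: "ea \<le> D / 4" and eb: "eb \<le> D / 4"
    using vdist_le_diam[OF K pK a] vdist_le_diam[OF K qK b] diam by (auto simp: ea_def eb_def)
  have "vnorm n \<xi> \<le> vdist n (vadd n a \<xi>) p + ea"
    using vdist_triangle[of n "vadd n a \<xi>" a p] by (simp add: vdist_vadd_self ea_def)
  moreover have "vnorm n \<xi> \<le> vdist n (vadd n b \<xi>) q + eb"
    using vdist_triangle[of n "vadd n b \<xi>" b q] by (simp add: vdist_vadd_self eb_def)
  ultimately have "D / 2 \<le> vdist n (vadd n a \<xi>) p + vdist n (vadd n b \<xi>) q"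
    using ea eb \<xi> by linarith
  then have "(k/2) * (D / 2) \<le> (k/2) * (vdist n (vadd n a \<xi>) p + vdist n (vadd n b \<xi>) q)"
    using k by (intro mult_left_mono) auto
  then have "t / 4 \<le> (k/2) * (vdist n (vadd n a \<xi>) p + vdist n (vadd n b \<xi>) q)"
    using t by linarith
  then have "vdist n p q * (1 + t / 4) \<le> vdist n p q * (1 + (k/2) * (vdist n (vadd n a \<xi>) p + vdist n (vadd n b \<xi>) q))"
    by (intro mult_left_mono) auto
  also have "\<dots> \<le> vdist n a b"
    using lse_dist_mult_le_strongly_convex[OF K SC k, of "vadd n a \<xi>" "vadd n b \<xi>"]
    by (simp add: p_def q_def vdist_vadd_right_cancel)
  finally have pq: "vdist n p q * (1 + t / 4) \<le> vdist n a b" .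
  have "vdist n a b \<le> ea + eb + vdist n p q"
    using vdist_triangle[of n a b p] vdist_triangle[of n p b q] vdist_commute[of n a p]
    unfolding ea_def eb_def by linarith
  then have "(vdist n a b - (ea + eb)) * (1 + t / 4) \<le> vdist n p q * (1 + t / 4)"
    using t by (intro mult_right_mono) auto
  with pq have "t * vdist n a b \<le> (4 + t) * (ea + eb)"
    by (simp add: field_simps)
  then show ?thesis
    using t by (simp add: ea_def eb_def p_def q_def field_simps)
qed

lemma lse_errors_power2_ge_of_large_noise:
  assumes K: "convex_body n K" and SC: "strongly_convex n k K" and k: "0 \<le> k"
    and a: "a \<in> K" and b: "b \<in> K" and t: "0 \<le> t" "t \<le> k * D"
    and diam: "diam n K \<le> D / 4" and \<xi>: "D / 2 \<le> vnorm n \<xi>"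
  shows "(t / (4 + t) * vdist n a b)\<^sup>2 / 2
           \<le> (vdist n (lse n K (vadd n a \<xi>)) a)\<^sup>2 + (vdist n (lse n K (vadd n b \<xi>)) b)\<^sup>2"
proof -
  define ea eb where "ea = vdist n (lse n K (vadd n a \<xi>)) a" and "eb = vdist n (lse n K (vadd n b \<xi>)) b"
  have "t / (4 + t) * vdist n a b \<le> ea + eb"
    unfolding ea_def eb_def by (rule lse_errors_ge_of_large_noise[OF K SC k a b t diam \<xi>])
  then have "(t / (4 + t) * vdist n a b)\<^sup>2 \<le> (ea + eb)\<^sup>2"
    using t by (intro power_mono) auto
  also have "\<dots> \<le> 2 * (ea\<^sup>2 + eb\<^sup>2)"
    using zero_le_power2[of "ea - eb"] by (simp add: power2_eq_square algebra_simps)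
  finally show ?thesis by (simp add: ea_def eb_def)
qed

lemma exists_risk_ge_of_small_diam:
  assumes n: "0 < n" and K: "convex_body n K" and SC: "strongly_convex n k K" and k: "0 \<le> k"
    and \<sigma>: "0 < \<sigma>" and t: "0 \<le> t" "t \<le> k * (\<sigma> * sqrt n)" and diam: "diam n K \<le> \<sigma> * sqrt n / 4"
  shows "\<exists>\<mu>\<in>K. (t / (9 * (4 + t)) * diam n K)\<^sup>2 \<le> risk n K \<sigma> \<mu>"
proof -
  obtain a b where a: "a \<in> K" and b: "b \<in> K" and ab: "diam n K / 2 < vdist n a b"
    using exists_vdist_gt_half_diam[OF K n] by blast
  define \<beta> where "\<beta> = t / (4 + t)"
  define err where "err \<mu> \<xi> = (vdist n (lse n K (vadd n \<mu> \<xi>)) \<mu>)\<^sup>2" for \<mu> \<xi>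
  have int: "integrable (gauss n \<sigma>) (err \<mu>)" if "\<mu> \<in> K" for \<mu>
    unfolding err_def using K that \<sigma> by (rule integrable_risk_integrand)
  have large: "(\<beta> * vdist n a b)\<^sup>2 / 2 \<le> err a \<xi> + err b \<xi>" if "\<sigma> * sqrt n / 2 \<le> vnorm n \<xi>" for \<xi>
    unfolding \<beta>_def err_def by (rule lse_errors_power2_ge_of_large_noise[OF K SC k a b t diam that])
  have "integrable (gauss n \<sigma>) (\<lambda>\<xi>. err a \<xi> + err b \<xi>)"
    using int[OF a] int[OF b] by (rule Bochner_Integration.integrable_add)
  then have "3 * ((\<beta> * vdist n a b)\<^sup>2 / 2) / 14 \<le> (\<integral>\<xi>. err a \<xi> + err b \<xi> \<partial>gauss n \<sigma>)"
  proof (rule gauss_integral_ge_of_large_noise[OF \<sigma> n])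
    show "0 \<le> err a \<xi> + err b \<xi>" for \<xi> by (simp add: err_def)
  qed (use large in auto)
  also have "\<dots> = risk n K \<sigma> a + risk n K \<sigma> b"
    unfolding risk_def err_def[symmetric] using int[OF a] int[OF b]
    by (rule Bochner_Integration.integral_add)
  finally have sum: "3 * (\<beta> * vdist n a b)\<^sup>2 / 28 \<le> risk n K \<sigma> a + risk n K \<sigma> b" by simp
  have "(\<beta> * diam n K)\<^sup>2 \<le> (\<beta> * (2 * vdist n a b))\<^sup>2"
    using ab t diam_pos[OF K n] by (intro power_mono mult_left_mono) (auto simp: \<beta>_def)
  moreover have "(t / (9 * (4 + t)) * diam n K)\<^sup>2 = (\<beta> * diam n K / 9)\<^sup>2"
    by (simp add: \<beta>_def mult.commute)
  moreover have "(\<beta> * diam n K / 9)\<^sup>2 = (\<beta> * diam n K)\<^sup>2 / 81"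
    by (simp add: power_divide)
  moreover have "(\<beta> * (2 * vdist n a b))\<^sup>2 = 4 * (\<beta> * vdist n a b)\<^sup>2"
    by (simp add: power_mult_distrib)
  ultimately have "(t / (9 * (4 + t)) * diam n K)\<^sup>2 \<le> 3 * (\<beta> * vdist n a b)\<^sup>2 / 56"
    using zero_le_power2[of "\<beta> * vdist n a b"] by linarith
  with sum have "(t / (9 * (4 + t)) * diam n K)\<^sup>2 \<le> risk n K \<sigma> a
      \<or> (t / (9 * (4 + t)) * diam n K)\<^sup>2 \<le> risk n K \<sigma> b"
    by linarith
  with a b show ?thesis by blast
qed

text \<open>Since the ball of radius \<open>k |a - b|\<^sup>2 / 4\<close> around the midpoint lies in \<open>K\<close>, its diameter
  bounds \<open>k |a - b|\<close> by \<open>4\<close>; this makes both \<open>D / 2\<close> and that radius at least \<open>t |a - b| / 32\<close>.\<close>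

lemma lse_midpoint_error_ge_of_large_noise:
  assumes n: "0 < n" and K: "convex_body n K" and SC: "strongly_convex n k K" and k: "0 \<le> k"
    and a: "a \<in> K" and b: "b \<in> K" and ab: "diam n K \<le> 2 * vdist n a b"
    and D: "0 < D" "D < 8 * vdist n a b" and t: "0 \<le> t" "t \<le> k * D"
    and \<xi>: "D / 2 \<le> vnorm n \<xi>"
  shows "t * vdist n a b / 32
           \<le> vdist n (lse n K (vadd n (vcomb n (1/2) a b) \<xi>)) (vcomb n (1/2) a b)"
proof -
  define d0 m r where "d0 = vdist n a b" and "m = vcomb n (1/2) a b" and "r = k * d0\<^sup>2 / 4"
  have ball: "ncball n m r \<subseteq> K"
    unfolding m_def r_def d0_def using SC a b by (rule strongly_convex_midpoint_ball)
  have r: "0 \<le> r" using k by (simp add: r_def)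
  have d0: "0 < d0" using D by (simp add: d0_def)
  have "k * d0 * d0 / 2 \<le> 2 * d0"
    using diam_ge_two_radius[OF K n r ball] ab by (simp add: r_def d0_def power2_eq_square)
  then have kd0: "k * d0 \<le> 4" using d0 by (simp add: field_simps)
  have "t * d0 \<le> k * D * d0" using t d0 by (intro mult_right_mono) auto
  also have "\<dots> = (k * d0) * D" by (simp add: mult_ac)
  also have "\<dots> \<le> 4 * D" using kd0 D by (intro mult_right_mono) auto
  finally have "t * d0 / 32 \<le> D / 2" using D by linarith
  moreover have "t * d0 \<le> k * (8 * d0) * d0"
    using t k D d0 by (intro mult_right_mono order_trans[OF t(2)] mult_left_mono) (auto simp: d0_def)
  then have "t * d0 / 32 \<le> r" by (simp add: r_def power2_eq_square mult_ac)
  ultimately have "t * d0 / 32 \<le> min (D / 2) r" by simp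
  also have "\<dots> \<le> min (vdist n (vadd n m \<xi>) m) r"
    using \<xi> by (simp add: vdist_vadd_self min.coboundedI1)
  also have "\<dots> \<le> vdist n (lse n K (vadd n m \<xi>)) m"
    by (rule lse_dist_ge_min_of_ball[OF K ball r])
  finally show ?thesis by (simp add: d0_def m_def)
qed

lemma exists_risk_ge_of_large_diam:
  assumes n: "0 < n" and K: "convex_body n K" and SC: "strongly_convex n k K" and k: "0 \<le> k"
    and \<sigma>: "0 < \<sigma>" and t: "0 \<le> t" "t \<le> k * (\<sigma> * sqrt n)" and diam: "\<sigma> * sqrt n / 4 < diam n K"
  shows "\<exists>\<mu>\<in>K. (t / 150 * diam n K)\<^sup>2 \<le> risk n K \<sigma> \<mu>"
proof -
  obtain a b where a: "a \<in> K" and b: "b \<in> K" and ab: "diam n K / 2 < vdist n a b"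
    using exists_vdist_gt_half_diam[OF K n] by blast
  define d0 m where "d0 = vdist n a b" and "m = vcomb n (1/2) a b"
  have mK: "m \<in> K" using convex_body_vcomb[OF K a b] by (simp add: m_def)
  define err where "err \<xi> = (vdist n (lse n K (vadd n m \<xi>)) m)\<^sup>2" for \<xi>
  have "integrable (gauss n \<sigma>) err"
    unfolding err_def using K mK \<sigma> by (rule integrable_risk_integrand)
  then have "3 * (t * d0 / 32)\<^sup>2 / 14 \<le> (\<integral>\<xi>. err \<xi> \<partial>gauss n \<sigma>)"
  proof (rule gauss_integral_ge_of_large_noise[OF \<sigma> n])
    show "0 \<le> err \<xi>" for \<xi> by (simp add: err_def)
    show "(t * d0 / 32)\<^sup>2 \<le> err \<xi>" if "\<sigma> * sqrt n / 2 \<le> vnorm n \<xi>" for \<xi>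
      unfolding err_def m_def d0_def using t ab diam \<sigma> n that
      by (intro power_mono lse_midpoint_error_ge_of_large_noise[OF n K SC k a b]) auto
  qed simp
  moreover have "(t / 150 * diam n K)\<^sup>2 \<le> 3 * (t * d0 / 32)\<^sup>2 / 14"
  proof -
    have "(t / 150 * diam n K)\<^sup>2 \<le> (t / 150 * (2 * d0))\<^sup>2"
      using t ab diam_pos[OF K n] by (intro power_mono mult_left_mono) (auto simp: d0_def)
    moreover have "(t / 150 * (2 * d0))\<^sup>2 = (t * d0)\<^sup>2 / 5625"
      by (simp add: power_mult_distrib power_divide)
    moreover have "3 * (t * d0 / 32)\<^sup>2 / 14 = 3 * (t * d0)\<^sup>2 / 14336"
      by (simp add: power_divide)
    ultimately show ?thesis using zero_le_power2[of "t * d0"] by linarith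
  qed
  ultimately have "(t / 150 * diam n K)\<^sup>2 \<le> risk n K \<sigma> m"
    unfolding risk_def err_def by linarith
  with mK show ?thesis by blast
qed

lemma exists_risk_ge_diam:
  assumes n: "0 < n" and K: "convex_body n K" and SC: "strongly_convex n k K" and k: "0 \<le> k"
    and \<sigma>: "0 < \<sigma>" and t: "0 \<le> t" "t \<le> k * (\<sigma> * sqrt n)"
  shows "\<exists>\<mu>\<in>K. (t / (150 * (4 + t)) * diam n K)\<^sup>2 \<le> risk n K \<sigma> \<mu>"
proof -
  have le: "(t / (150 * (4 + t)) * diam n K)\<^sup>2 \<le> (c * diam n K)\<^sup>2"
    if "t / (150 * (4 + t)) \<le> c" for c
    using that t diam_pos[OF K n] by (intro power_mono mult_right_mono) auto
  show ?thesis
  proof (cases "diam n K \<le> \<sigma> * sqrt n / 4")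
    case True
    have "t / (150 * (4 + t)) \<le> t / (9 * (4 + t))"
      using t by (intro divide_left_mono) auto
    with exists_risk_ge_of_small_diam[OF n K SC k \<sigma> t True] le show ?thesis
      by (meson order_trans)
  next
    case False
    have "t / (150 * (4 + t)) \<le> t / 150"
      using t by (intro divide_left_mono) auto
    with exists_risk_ge_of_large_diam[OF n K SC k \<sigma> t] False le show ?thesis
      by (meson not_le order_trans)
  qed
qed

theorem mainTheorem17:
  fixes c1 c2 :: real
  assumes "c1 > 0" and "c2 > 0"
  shows "\<exists>c>0. \<forall>n K k \<sigma>.
           n \<ge> 1 \<and> convex_body n K \<and> k > 0 \<and> strongly_convex n k K
           \<and> c1 / (k * sqrt (real n)) \<le> \<sigma> \<and> \<sigma> \<le> c2 / (k * sqrt (real n))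
           \<longrightarrow> eps n K \<sigma> \<ge> c * diam n K"
proof (intro exI conjI allI impI)
  show "0 < c1 / (150 * (4 + c1))" using \<open>c1 > 0\<close> by simp
  fix n K k \<sigma>
  assume "n \<ge> 1 \<and> convex_body n K \<and> k > 0 \<and> strongly_convex n k K
    \<and> c1 / (k * sqrt (real n)) \<le> \<sigma> \<and> \<sigma> \<le> c2 / (k * sqrt (real n))"
  then have n: "0 < n" and K: "convex_body n K" and k: "0 < k" and SC: "strongly_convex n k K"
    and \<sigma>_ge: "c1 / (k * sqrt n) \<le> \<sigma>" by auto
  have "0 < c1 / (k * sqrt n)" using \<open>c1 > 0\<close> k n by simp
  then have \<sigma>: "0 < \<sigma>" using \<sigma>_ge by linarith
  have "c1 \<le> k * (\<sigma> * sqrt n)" using \<sigma>_ge k n by (simp add: pos_divide_le_eq mult_ac)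
  with exists_risk_ge_diam[OF n K SC _ \<sigma>, of c1] k \<open>c1 > 0\<close>
  obtain \<mu> where "\<mu> \<in> K" "(c1 / (150 * (4 + c1)) * diam n K)\<^sup>2 \<le> risk n K \<sigma> \<mu>" by auto
  then show "c1 / (150 * (4 + c1)) * diam n K \<le> eps n K \<sigma>"
    by (intro eps_ge_of_risk_ge[OF K \<sigma>])
qed

end
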